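(* Let $(P,w)$ be a naturally labeled poset with $n$ elements and $\alpha$ a composition of $n$ with $\ell$ parts. For $\sigma\in\mathcal L^*_\alpha(P,w)$ define $f_\sigma:P\to[\ell]$ by $f_\sigma(x)=i$ for $x\in P_i^\alpha(\sigma)$. Then $\sigma\mapsto f_\sigma$ is a bijection from $\mathcal L^*_\alpha(P,w)$ to $\mathcal O^*_\alpha(P)$.
   Context: Compositions: $\alpha=(\alpha_1,\dots,\alpha_\ell)\vDash n$, blocks $B_i(\alpha)=\{\alpha_1+\dots+\alpha_{i-1}+1,\dots,\alpha_1+\dots+\alpha_i\}$. A labeled poset $(P,w)$ is a finite poset with bijection $w:P\to[n]$, naturally labeled if $x<_Py\Rightarrow w(x)<w(y)$. $\mathcal L(P,w)=\{\sigma\in\mathfrak S_n:\sigma^{-1}(w(x))<\sigma^{-1}(w(y))\text{ whenever }x<_Py\}$. $\sigma$ is $\alpha$-unimodal if on each block $[a,b]=B_i(\alpha)$, $\sigma_a>\dots>\sigma_k<\dots<\sigma_b$ for some $k$. $P_i^\alpha(\sigma)=\{w^{-1}(\sigma_j):j\in B_i(\alpha)\}$ with induced order. $\mathcal L^*_\alpha(P,w)$ is the set of $\alpha$-unimodal $\sigma\in\mathcal L(P,w)$ with every $P_i^\alpha(\sigma)$ having a unique minimal element. $\mathcal O^*_\alpha(P)$ is the set of surjections $f:P\to[\ell]$ with $x\le_Py\Rightarrow f(x)\le f(y)$, $|f^{-1}(i)|=\alpha_i$ for all $i$, and each fiber $f^{-1}(i)$ (induced subposet) having a unique minimal element. *)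

theory Defs
  imports "HOL-Library.FuncSet" "HOL-Combinatorics.Permutations"
begin

definition is_poset :: "'a set \<Rightarrow> ('a \<Rightarrow> 'a \<Rightarrow> bool) \<Rightarrow> bool" where
  "is_poset P le \<longleftrightarrow> finite P \<and>
     (\<forall>x\<in>P. le x x) \<and>
     (\<forall>x\<in>P. \<forall>y\<in>P. le x y \<and> le y x \<longrightarrow> x = y) \<and>
     (\<forall>x\<in>P. \<forall>y\<in>P. \<forall>z\<in>P. le x y \<and> le y z \<longrightarrow> le x z)"

definition labeled_poset :: "'a set \<Rightarrow> ('a \<Rightarrow> 'a \<Rightarrow> bool) \<Rightarrow> ('a \<Rightarrow> nat) \<Rightarrow> nat \<Rightarrow> bool" where
  "labeled_poset P le w n \<longleftrightarrow> is_poset P le \<and> bij_betw w P {1..n}"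

definition naturally_labeled :: "'a set \<Rightarrow> ('a \<Rightarrow> 'a \<Rightarrow> bool) \<Rightarrow> ('a \<Rightarrow> nat) \<Rightarrow> bool" where
  "naturally_labeled P le w \<longleftrightarrow> (\<forall>x\<in>P. \<forall>y\<in>P. le x y \<and> x \<noteq> y \<longrightarrow> w x < w y)"

text \<open>A composition of n: list of positive parts summing to n; part i (1-based) is alpha ! (i-1).\<close>
definition is_composition :: "nat list \<Rightarrow> nat \<Rightarrow> bool" where
  "is_composition alpha n \<longleftrightarrow> (\<forall>a\<in>set alpha. 0 < a) \<and> sum_list alpha = n"

definition block :: "nat list \<Rightarrow> nat \<Rightarrow> nat set" where
  "block alpha i = {sum_list (take (i - 1) alpha) + 1 .. sum_list (take i alpha)}"

text \<open>Linear extensions L(P,w), permutations of [n] given as functions nat => nat, sigma j = sigma_j.\<close>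
definition lin_ext :: "'a set \<Rightarrow> ('a \<Rightarrow> 'a \<Rightarrow> bool) \<Rightarrow> ('a \<Rightarrow> nat) \<Rightarrow> nat \<Rightarrow> (nat \<Rightarrow> nat) set" where
  "lin_ext P le w n = {\<sigma>. \<sigma> permutes {1..n} \<and>
     (\<forall>x\<in>P. \<forall>y\<in>P. le x y \<and> x \<noteq> y \<longrightarrow> inv \<sigma> (w x) < inv \<sigma> (w y))}"

definition alpha_unimodal :: "nat list \<Rightarrow> (nat \<Rightarrow> nat) \<Rightarrow> bool" where
  "alpha_unimodal alpha \<sigma> \<longleftrightarrow>
     (\<forall>i\<in>{1..length alpha}.
        \<exists>k\<in>block alpha i.
          (\<forall>j. j \<in> block alpha i \<and> j + 1 \<in> block alpha i \<and> j < k \<longrightarrow> \<sigma> j > \<sigma> (j + 1)) \<and>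
          (\<forall>j. j \<in> block alpha i \<and> j + 1 \<in> block alpha i \<and> k \<le> j \<longrightarrow> \<sigma> j < \<sigma> (j + 1)))"

definition part_set :: "'a set \<Rightarrow> ('a \<Rightarrow> nat) \<Rightarrow> nat list \<Rightarrow> (nat \<Rightarrow> nat) \<Rightarrow> nat \<Rightarrow> 'a set" where
  "part_set P w alpha \<sigma> i = {x\<in>P. \<exists>j\<in>block alpha i. w x = \<sigma> j}"

definition unique_minimal :: "('a \<Rightarrow> 'a \<Rightarrow> bool) \<Rightarrow> 'a set \<Rightarrow> bool" where
  "unique_minimal le S \<longleftrightarrow> (\<exists>!m. m \<in> S \<and> (\<forall>y\<in>S. le y m \<longrightarrow> y = m))"

definition Lstar :: "'a set \<Rightarrow> ('a \<Rightarrow> 'a \<Rightarrow> bool) \<Rightarrow> ('a \<Rightarrow> nat) \<Rightarrow> nat \<Rightarrow> nat list \<Rightarrow> (nat \<Rightarrow> nat) set" where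
  "Lstar P le w n alpha = {\<sigma> \<in> lin_ext P le w n. alpha_unimodal alpha \<sigma> \<and>
     (\<forall>i\<in>{1..length alpha}. unique_minimal le (part_set P w alpha \<sigma> i))}"

definition Ostar :: "'a set \<Rightarrow> ('a \<Rightarrow> 'a \<Rightarrow> bool) \<Rightarrow> nat list \<Rightarrow> ('a \<Rightarrow> nat) set" where
  "Ostar P le alpha = {f \<in> P \<rightarrow>\<^sub>E {1..length alpha}.
     f ` P = {1..length alpha} \<and>
     (\<forall>x\<in>P. \<forall>y\<in>P. le x y \<longrightarrow> f x \<le> f y) \<and>
     (\<forall>i\<in>{1..length alpha}. card {x\<in>P. f x = i} = alpha ! (i - 1)) \<and>
     (\<forall>i\<in>{1..length alpha}. unique_minimal le {x\<in>P. f x = i})}"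

definition f_sigma :: "'a set \<Rightarrow> ('a \<Rightarrow> nat) \<Rightarrow> nat list \<Rightarrow> (nat \<Rightarrow> nat) \<Rightarrow> 'a \<Rightarrow> nat" where
  "f_sigma P w alpha \<sigma> = restrict (\<lambda>x. THE i. i \<in> {1..length alpha} \<and> x \<in> part_set P w alpha \<sigma> i) P"

end

theory Submission
  imports Defs "HOL-Library.Product_Lexorder"
begin

text \<open>In a linear extension \<open>\<sigma> \<in> L*\<close>, the unique minimal element of each part is its least
  element, hence has the smallest label and occupies the first position of its block; this puts the
  valley of every unimodal block at its start, so \<open>\<sigma>\<close> increases on each block. Consequently \<open>\<sigma>\<close>
  lists \<open>P\<close> in lexicographic order of \<open>(f\<^sub>\<sigma> x, w x)\<close> and is determined by \<open>f\<^sub>\<sigma>\<close>. Conversely, listing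
  \<open>P\<close> in this order for \<open>f \<in> O*\<close> places the fibre \<open>f\<^sup>-\<^sup>1(i)\<close> on block \<open>i\<close>; the natural labelling makes the
  result a linear extension, and its parts are the fibres of \<open>f\<close>.\<close>

definition rank :: "'a set \<Rightarrow> ('a \<Rightarrow> 'b::linorder) \<Rightarrow> 'a \<Rightarrow> nat" where
  "rank A k x = Suc (card {y\<in>A. k y < k x})"

lemma rank_strict_mono:
  assumes "finite A" "x \<in> A" "k x < k y"
  shows "rank A k x < rank A k y"
proof -
  have "{z\<in>A. k z < k x} \<subset> {z\<in>A. k z < k y}"
    using assms(2,3) by (auto intro: less_trans)
  then show ?thesis
    unfolding rank_def using assms(1) by (simp add: psubset_card_mono)
qed

lemma rank_less_iff:
  assumes "finite A" "inj_on k A" "x \<in> A" "y \<in> A"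
  shows "rank A k x < rank A k y \<longleftrightarrow> k x < k y"
proof
  assume less: "rank A k x < rank A k y"
  then have "x \<noteq> y" by auto
  then have "k x \<noteq> k y"
    using assms(2-4) by (auto dest: inj_onD)
  moreover have "\<not> k y < k x"
    using less rank_strict_mono[OF assms(1,4), of k x] by linarith
  ultimately show "k x < k y" by simp
next
  show "k x < k y \<Longrightarrow> rank A k x < rank A k y"
    by (rule rank_strict_mono[OF assms(1,3)])
qed

lemma bij_betw_rank:
  assumes "finite A" "inj_on k A"
  shows "bij_betw (rank A k) A {1..card A}"
proof -
  have inj: "inj_on (rank A k) A"
  proof (rule inj_onI)
    fix x y assume "x \<in> A" "y \<in> A" "rank A k x = rank A k y"
    then show "x = y"
      using rank_less_iff[OF assms] inj_onD[OF assms(2)] by (metis less_irrefl linorder_cases)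
  qed
  have "rank A k x \<le> card A" if "x \<in> A" for x
  proof -
    have "card {y\<in>A. k y < k x} \<le> card (A - {x})"
      using assms(1) by (intro card_mono) auto
    then show ?thesis
      using assms(1) that card_gt_0_iff[of A] by (auto simp: rank_def)
  qed
  then have "rank A k ` A \<subseteq> {1..card A}"
    by (auto simp: rank_def)
  moreover have "card (rank A k ` A) = card {1..card A}"
    using card_image[OF inj] by simp
  ultimately show ?thesis
    using inj by (simp add: bij_betw_def card_subset_eq)
qed

lemma card_preimage_bij_betw:
  assumes g: "bij_betw g A B" and C: "C \<subseteq> B"
  shows "card {x\<in>A. g x \<in> C} = card C"
proof -
  have "g ` {x\<in>A. g x \<in> C} = C"
  proof
    show "C \<subseteq> g ` {x\<in>A. g x \<in> C}"
    proof
      fix c assume c: "c \<in> C"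
      then obtain x where "x \<in> A" "c = g x"
        using C bij_betw_imp_surj_on[OF g] by blast
      then show "c \<in> g ` {x\<in>A. g x \<in> C}"
        using c by blast
    qed
  qed blast
  then have "bij_betw g {x\<in>A. g x \<in> C} C"
    by (rule bij_betw_subset[OF g, rotated]) blast
  then show ?thesis
    by (rule bij_betw_same_card)
qed

lemma rank_unique:
  assumes g: "bij_betw g A {1..n}" and k: "inj_on k A"
    and mono: "\<And>x y. x \<in> A \<Longrightarrow> y \<in> A \<Longrightarrow> k x < k y \<Longrightarrow> g x < g y"
    and x: "x \<in> A"
  shows "g x = rank A k x"
proof -
  have same: "{y\<in>A. k y < k x} = {y\<in>A. g y < g x}"
  proof (intro Collect_cong conj_cong refl iffI)
    fix y assume y: "y \<in> A" and "g y < g x"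
    then have "x \<noteq> y" "\<not> k x < k y"
      using mono[OF x y] by auto
    then show "k y < k x"
      using k x y by (metis inj_onD linorder_cases)
  qed (use mono x in blast)
  have gx: "g x \<in> {1..n}"
    using g x by (auto dest: bij_betwE)
  have "{y\<in>A. g y < g x} = {y\<in>A. g y \<in> {1..<g x}}"
    using g by (auto dest: bij_betwE)
  also have "card \<dots> = card {1..<g x}"
    using gx by (intro card_preimage_bij_betw[OF g]) auto
  finally have "card {y\<in>A. g y < g x} = g x - 1"
    by simp
  then show ?thesis
    using gx by (simp add: rank_def same)
qed

lemma sum_list_take_mono:
  fixes alpha :: "nat list"
  assumes "i \<le> j"
  shows "sum_list (take i alpha) \<le> sum_list (take j alpha)"
proof -
  obtain d where "j = i + d"
    using assms le_Suc_ex by blast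
  then show ?thesis
    by (simp add: take_add)
qed

lemma sum_list_take_Suc:
  "i < length alpha \<Longrightarrow> sum_list (take (Suc i) alpha) = sum_list (take i alpha) + alpha ! i"
  by (simp add: take_Suc_conv_app_nth)

lemma block_eq_interval:
  assumes "i \<in> {1..length alpha}"
  shows "block alpha i = {sum_list (take (i - 1) alpha) + 1 .. sum_list (take (i - 1) alpha) + alpha ! (i - 1)}"
proof -
  have "sum_list (take i alpha) = sum_list (take (i - 1) alpha) + alpha ! (i - 1)"
    using assms sum_list_take_Suc[of "i - 1" alpha] by (cases i) auto
  then show ?thesis
    by (simp add: block_def)
qed

lemma card_block: "i \<in> {1..length alpha} \<Longrightarrow> card (block alpha i) = alpha ! (i - 1)"
  by (simp add: block_eq_interval)

lemma first_in_block:
  assumes "\<forall>a\<in>set alpha. 0 < a" "i \<in> {1..length alpha}"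
  shows "sum_list (take (i - 1) alpha) + 1 \<in> block alpha i"
proof -
  have "0 < alpha ! (i - 1)"
    using assms by auto
  then show ?thesis
    using assms(2) by (simp add: block_eq_interval)
qed

lemma block_subset: "i \<le> length alpha \<Longrightarrow> block alpha i \<subseteq> {1..sum_list alpha}"
  using sum_list_take_mono[of i "length alpha" alpha] by (auto simp: block_def)

lemma block_less:
  assumes "1 \<le> i" "i < i'" "j \<in> block alpha i" "j' \<in> block alpha i'"
  shows "j < j'"
proof -
  have "sum_list (take i alpha) \<le> sum_list (take (i' - 1) alpha)"
    using assms(2) by (intro sum_list_take_mono) auto
  then show ?thesis
    using assms(3,4) by (auto simp: block_def)
qed

lemma block_unique:
  assumes "i \<in> {1..length alpha}" "i' \<in> {1..length alpha}" "j \<in> block alpha i" "j \<in> block alpha i'"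
  shows "i = i'"
  using block_less[of i i' j alpha j] block_less[of i' i j alpha j] assms
  by (cases i i' rule: linorder_cases) auto

lemma ex_block:
  assumes "j \<in> {1..sum_list alpha}"
  shows "\<exists>i\<in>{1..length alpha}. j \<in> block alpha i"
proof -
  define i where "i = (LEAST i. j \<le> sum_list (take i alpha))"
  have ex: "j \<le> sum_list (take (length alpha) alpha)"
    using assms by simp
  have upper: "j \<le> sum_list (take i alpha)"
    unfolding i_def by (rule LeastI[of _ "length alpha"]) (rule ex)
  have "i \<le> length alpha"
    unfolding i_def by (rule Least_le) (rule ex)
  moreover have "i \<noteq> 0"
  proof
    assume "i = 0"
    then show False
      using upper assms by simp
  qed
  moreover have "\<not> j \<le> sum_list (take (i - 1) alpha)"
    using \<open>i \<noteq> 0\<close> unfolding i_def by (intro not_less_Least) (auto simp: i_def)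
  ultimately show ?thesis
    using upper by (auto simp: block_def intro!: bexI[of _ i])
qed

definition block_index :: "nat list \<Rightarrow> nat \<Rightarrow> nat" where
  "block_index alpha j = (THE i. i \<in> {1..length alpha} \<and> j \<in> block alpha i)"

lemma block_index_eq: "i \<in> {1..length alpha} \<Longrightarrow> j \<in> block alpha i \<Longrightarrow> block_index alpha j = i"
  unfolding block_index_def by (rule the_equality) (use block_unique in blast)+

lemma block_index:
  assumes "j \<in> {1..sum_list alpha}"
  shows "block_index alpha j \<in> {1..length alpha}" "j \<in> block alpha (block_index alpha j)"
  using ex_block[OF assms] block_index_eq by metis+

lemma block_index_mono:
  assumes "j \<in> {1..sum_list alpha}" "j' \<in> {1..sum_list alpha}" "j \<le> j'"
  shows "block_index alpha j \<le> block_index alpha j'"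
  using block_less[of "block_index alpha j'" "block_index alpha j" j' alpha j] block_index assms
  by fastforce

lemma card_le_level:
  fixes f :: "'a \<Rightarrow> nat" and alpha :: "nat list"
  assumes "finite A" "\<And>x. x \<in> A \<Longrightarrow> 1 \<le> f x"
    and fibers: "\<And>i. i \<in> {1..length alpha} \<Longrightarrow> card {x\<in>A. f x = i} = alpha ! (i - 1)"
    and "c \<le> length alpha"
  shows "card {x\<in>A. f x \<le> c} = sum_list (take c alpha)"
  using assms(4)
proof (induction c)
  case 0
  have "{x\<in>A. f x \<le> 0} = {}"
    using assms(2) by fastforce
  then show ?case
    by (metis card.empty sum_list.Nil take_0)
next
  case (Suc c)
  have "{x\<in>A. f x \<le> Suc c} = {x\<in>A. f x \<le> c} \<union> {x\<in>A. f x = Suc c}"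
    by auto
  moreover have "card ({x\<in>A. f x \<le> c} \<union> {x\<in>A. f x = Suc c}) = card {x\<in>A. f x \<le> c} + card {x\<in>A. f x = Suc c}"
    using assms(1) by (intro card_Un_disjoint) auto
  ultimately have "card {x\<in>A. f x \<le> Suc c} = card {x\<in>A. f x \<le> c} + card {x\<in>A. f x = Suc c}"
    by simp
  then show ?case
    using Suc fibers[of "Suc c"] sum_list_take_Suc[of c alpha] by simp
qed

lemma alpha_unimodal_if_ascending:
  assumes "\<forall>a\<in>set alpha. 0 < a"
    and asc: "\<And>i j. i \<in> {1..length alpha} \<Longrightarrow> j \<in> block alpha i \<Longrightarrow> j + 1 \<in> block alpha i \<Longrightarrow> \<sigma> j < \<sigma> (j + 1)"
  shows "alpha_unimodal alpha \<sigma>"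
  unfolding alpha_unimodal_def
proof
  fix i assume i: "i \<in> {1..length alpha}"
  show "\<exists>k\<in>block alpha i.
          (\<forall>j. j \<in> block alpha i \<and> j + 1 \<in> block alpha i \<and> j < k \<longrightarrow> \<sigma> j > \<sigma> (j + 1)) \<and>
          (\<forall>j. j \<in> block alpha i \<and> j + 1 \<in> block alpha i \<and> k \<le> j \<longrightarrow> \<sigma> j < \<sigma> (j + 1))"
  proof (intro bexI[OF _ first_in_block[OF assms(1) i]] conjI allI impI)
    fix j assume "j \<in> block alpha i \<and> j + 1 \<in> block alpha i \<and> j < sum_list (take (i - 1) alpha) + 1"
    then show "\<sigma> j > \<sigma> (j + 1)"
      by (simp add: block_def)
  qed (use asc[OF i] in blast)
qed

lemma is_posetD:
  assumes "is_poset P le"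
  shows "finite P"
    and "x \<in> P \<Longrightarrow> le x x"
    and "x \<in> P \<Longrightarrow> y \<in> P \<Longrightarrow> le x y \<Longrightarrow> le y x \<Longrightarrow> x = y"
    and "x \<in> P \<Longrightarrow> y \<in> P \<Longrightarrow> z \<in> P \<Longrightarrow> le x y \<Longrightarrow> le y z \<Longrightarrow> le x z"
  using assms unfolding is_poset_def by metis+

lemma ex_minimal_below:
  assumes P: "is_poset P le" and Q: "Q \<subseteq> P" and y: "y \<in> Q"
  shows "\<exists>z\<in>Q. le z y \<and> (\<forall>u\<in>Q. le u z \<longrightarrow> u = z)"
proof -
  define down where "down z = {v\<in>P. le v z}" for z
  have "y \<in> Q \<and> le y y"
    using y Q is_posetD(2)[OF P] by auto
  from ex_has_least_nat[where P = "\<lambda>z. z \<in> Q \<and> le z y" and m = "\<lambda>z. card (down z)", OF this]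
  obtain z where z: "z \<in> Q" "le z y"
    and least: "\<And>z'. z' \<in> Q \<Longrightarrow> le z' y \<Longrightarrow> card (down z) \<le> card (down z')"
    by auto
  have "u = z" if u: "u \<in> Q" "le u z" for u
  proof (rule ccontr)
    assume "u \<noteq> z"
    have uz: "u \<in> P" "z \<in> P"
      using u z Q by auto
    have "down u \<subseteq> down z"
    proof
      fix v assume "v \<in> down u"
      then show "v \<in> down z"
        using is_posetD(4)[OF P _ uz, of v] u(2) by (simp add: down_def)
    qed
    moreover have "z \<in> down z" "z \<notin> down u"
      using is_posetD(2,3)[OF P] uz u(2) \<open>u \<noteq> z\<close> by (auto simp: down_def)
    ultimately have "card (down u) < card (down z)"
      using is_posetD(1)[OF P] by (intro psubset_card_mono) (auto simp: down_def)
    moreover have "le u y"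
      using is_posetD(4)[OF P uz] Q y u(2) z(2) by blast
    ultimately show False
      using least[OF u(1)] by simp
  qed
  then show ?thesis
    using z by blast
qed

lemma unique_minimal_least:
  assumes "is_poset P le" "Q \<subseteq> P" "unique_minimal le Q"
    and m: "m \<in> Q" "\<forall>u\<in>Q. le u m \<longrightarrow> u = m" and "y \<in> Q"
  shows "le m y"
  using ex_minimal_below[OF assms(1,2,6)] assms(3) m unfolding unique_minimal_def by blast

lemma permutation_with_positions:
  assumes w: "bij_betw w A {1..n}" and \<tau>: "bij_betw \<tau> A {1..n}"
  obtains \<sigma> where "\<sigma> permutes {1..n}" "\<And>x. x \<in> A \<Longrightarrow> inv \<sigma> (w x) = \<tau> x"
proof
  define \<sigma> where "\<sigma> j = (if j \<in> {1..n} then w (inv_into A \<tau> j) else j)" for j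
  have "bij_betw (w \<circ> inv_into A \<tau>) {1..n} {1..n}"
    by (rule bij_betw_trans[OF bij_betw_inv_into[OF \<tau>] w])
  then have "bij_betw \<sigma> {1..n} {1..n}"
    by (rule bij_betw_cong[THEN iffD1, rotated]) (simp add: \<sigma>_def)
  then show perm: "\<sigma> permutes {1..n}"
    by (rule bij_imp_permutes) (auto simp: \<sigma>_def)
  fix x assume x: "x \<in> A"
  have "\<sigma> (\<tau> x) = w x"
    using x bij_betwE[OF \<tau>] bij_betw_imp_inj_on[OF \<tau>] by (simp add: \<sigma>_def)
  then show "inv \<sigma> (w x) = \<tau> x"
    using permutes_inv_eq[OF perm] by blast
qed

locale labeled_composition =
  fixes P :: "'a set" and le :: "'a \<Rightarrow> 'a \<Rightarrow> bool" and w :: "'a \<Rightarrow> nat"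
    and n :: nat and alpha :: "nat list"
  assumes labeled: "labeled_poset P le w n"
    and natural: "naturally_labeled P le w"
    and composition: "is_composition alpha n"
begin

lemma poset: "is_poset P le"
  using labeled by (simp add: labeled_poset_def)

lemma finite_P: "finite P"
  by (rule is_posetD(1)[OF poset])

lemma bij_w: "bij_betw w P {1..n}"
  using labeled by (simp add: labeled_poset_def)

lemma parts_pos: "\<forall>a\<in>set alpha. 0 < a"
  using composition by (simp add: is_composition_def)

lemma sum_alpha: "sum_list alpha = n"
  using composition by (simp add: is_composition_def)

lemma block_in_range: "i \<in> {1..length alpha} \<Longrightarrow> block alpha i \<subseteq> {1..n}"
  using block_subset[of i alpha] sum_alpha by simp

lemma less_label: "x \<in> P \<Longrightarrow> y \<in> P \<Longrightarrow> le x y \<Longrightarrow> x \<noteq> y \<Longrightarrow> w x < w y"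
  using natural by (simp add: naturally_labeled_def)

lemma inj_on_level_label: "inj_on (\<lambda>x. (f x, w x)) P"
  using bij_betw_imp_inj_on[OF bij_w] by (auto intro: inj_onI dest: inj_onD)

lemma bij_position:
  assumes "\<sigma> permutes {1..n}"
  shows "bij_betw (\<lambda>x. inv \<sigma> (w x)) P {1..n}"
  using bij_betw_trans[OF bij_w permutes_imp_bij[OF permutes_inv[OF assms]]] by (simp add: comp_def)

lemma position_in:
  assumes "\<sigma> permutes {1..n}" "x \<in> P"
  shows "inv \<sigma> (w x) \<in> {1..n}"
  using bij_betwE[OF bij_position[OF assms(1)]] assms(2) by blast

lemma ex_at_position:
  assumes "\<sigma> permutes {1..n}" "j \<in> {1..n}"
  shows "\<exists>x\<in>P. inv \<sigma> (w x) = j"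
proof -
  have "j \<in> (\<lambda>x. inv \<sigma> (w x)) ` P"
    using bij_betw_imp_surj_on[OF bij_position[OF assms(1)]] assms(2) by simp
  then show ?thesis
    by blast
qed

lemma label_at_position: "\<sigma> permutes {1..n} \<Longrightarrow> \<sigma> (inv \<sigma> y) = y"
  by (rule permutes_inverses(1))

lemma part_set_eq:
  assumes p: "\<sigma> permutes {1..n}"
  shows "part_set P w alpha \<sigma> i = {x\<in>P. inv \<sigma> (w x) \<in> block alpha i}"
proof -
  have "(\<exists>j\<in>block alpha i. w x = \<sigma> j) \<longleftrightarrow> inv \<sigma> (w x) \<in> block alpha i" for x
    using permutes_inv_eq[OF p] by metis
  then show ?thesis
    by (simp add: part_set_def)
qed

lemma f_sigma_eq:
  assumes p: "\<sigma> permutes {1..n}" and x: "x \<in> P"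
  shows "f_sigma P w alpha \<sigma> x = block_index alpha (inv \<sigma> (w x))"
proof -
  have pos: "inv \<sigma> (w x) \<in> {1..sum_list alpha}"
    using position_in[OF p x] sum_alpha by simp
  have "(THE i. i \<in> {1..length alpha} \<and> x \<in> part_set P w alpha \<sigma> i) = block_index alpha (inv \<sigma> (w x))"
  proof (rule the_equality)
    show "block_index alpha (inv \<sigma> (w x)) \<in> {1..length alpha} \<and>
        x \<in> part_set P w alpha \<sigma> (block_index alpha (inv \<sigma> (w x)))"
      using block_index[OF pos] x by (simp add: part_set_eq[OF p])
  next
    fix i assume "i \<in> {1..length alpha} \<and> x \<in> part_set P w alpha \<sigma> i"
    then show "i = block_index alpha (inv \<sigma> (w x))"
      using block_index_eq[of i alpha "inv \<sigma> (w x)"] by (simp add: part_set_eq[OF p])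
  qed
  then show ?thesis
    using x by (simp add: f_sigma_def)
qed

lemma fiber_f_sigma:
  assumes p: "\<sigma> permutes {1..n}" and i: "i \<in> {1..length alpha}"
  shows "{x\<in>P. f_sigma P w alpha \<sigma> x = i} = part_set P w alpha \<sigma> i"
proof -
  have "f_sigma P w alpha \<sigma> x = i \<longleftrightarrow> inv \<sigma> (w x) \<in> block alpha i" if x: "x \<in> P" for x
  proof -
    have "inv \<sigma> (w x) \<in> {1..sum_list alpha}"
      using position_in[OF p x] sum_alpha by simp
    then show ?thesis
      using block_index block_index_eq[OF i] f_sigma_eq[OF p x] by metis
  qed
  then show ?thesis
    by (auto simp: part_set_eq[OF p])
qed

lemma Lstar_D:
  assumes "\<sigma> \<in> Lstar P le w n alpha"
  shows "\<sigma> permutes {1..n}"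
    and "\<And>x y. x \<in> P \<Longrightarrow> y \<in> P \<Longrightarrow> le x y \<Longrightarrow> x \<noteq> y \<Longrightarrow> inv \<sigma> (w x) < inv \<sigma> (w y)"
    and "alpha_unimodal alpha \<sigma>"
    and "\<And>i. i \<in> {1..length alpha} \<Longrightarrow> unique_minimal le (part_set P w alpha \<sigma> i)"
  using assms by (auto simp: Lstar_def lin_ext_def)

lemma Lstar_block_start_smallest:
  assumes s: "\<sigma> \<in> Lstar P le w n alpha" and i: "i \<in> {1..length alpha}"
    and j: "j \<in> block alpha i" "sum_list (take (i - 1) alpha) + 1 < j"
  shows "\<sigma> (sum_list (take (i - 1) alpha) + 1) < \<sigma> j"
proof -
  let ?a = "sum_list (take (i - 1) alpha) + 1"
  note p = Lstar_D(1)[OF s]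
  define Q where "Q = part_set P w alpha \<sigma> i"
  have Q_eq: "Q = {x\<in>P. inv \<sigma> (w x) \<in> block alpha i}"
    unfolding Q_def by (rule part_set_eq[OF p])
  obtain m where m: "m \<in> Q" "\<forall>u\<in>Q. le u m \<longrightarrow> u = m"
    using Lstar_D(4)[OF s i] unfolding Q_def unique_minimal_def by blast
  have least: "le m u" if "u \<in> Q" for u
    using unique_minimal_least[OF poset _ Lstar_D(4)[OF s i]] m that Q_eq unfolding Q_def by auto
  have a: "?a \<in> block alpha i"
    by (rule first_in_block[OF parts_pos i])
  obtain z where z: "z \<in> P" "inv \<sigma> (w z) = ?a"
    using ex_at_position[OF p] a block_in_range[OF i] by blast
  obtain y where y: "y \<in> P" "inv \<sigma> (w y) = j"
    using ex_at_position[OF p] j(1) block_in_range[OF i] by blast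
  have "z \<in> Q" "y \<in> Q"
    using Q_eq z y a j(1) by auto
  have "m = z"
  proof (rule ccontr)
    assume "m \<noteq> z"
    moreover have "m \<in> P"
      using m(1) Q_eq by auto
    ultimately have "inv \<sigma> (w m) < ?a"
      using Lstar_D(2)[OF s \<open>m \<in> P\<close> z(1) least[OF \<open>z \<in> Q\<close>]] z(2) by simp
    moreover have "inv \<sigma> (w m) \<in> block alpha i"
      using m(1) Q_eq by auto
    ultimately show False
      by (simp add: block_def)
  qed
  moreover have "z \<noteq> y"
    using y(2) z(2) j(2) by auto
  ultimately have "w z < w y"
    using less_label[OF z(1) y(1)] least[OF \<open>y \<in> Q\<close>] by simp
  then show ?thesis
    using y(2) z(2) label_at_position[OF p] by metis
qed

lemma Lstar_ascent:
  assumes s: "\<sigma> \<in> Lstar P le w n alpha" and i: "i \<in> {1..length alpha}"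
    and j: "j \<in> block alpha i" "j + 1 \<in> block alpha i"
  shows "\<sigma> j < \<sigma> (j + 1)"
proof -
  let ?a = "sum_list (take (i - 1) alpha) + 1"
  obtain k where k: "k \<in> block alpha i"
    and desc: "\<And>j. j \<in> block alpha i \<Longrightarrow> j + 1 \<in> block alpha i \<Longrightarrow> j < k \<Longrightarrow> \<sigma> (j + 1) < \<sigma> j"
    and asc: "\<And>j. j \<in> block alpha i \<Longrightarrow> j + 1 \<in> block alpha i \<Longrightarrow> k \<le> j \<Longrightarrow> \<sigma> j < \<sigma> (j + 1)"
    using Lstar_D(3)[OF s] i unfolding alpha_unimodal_def by blast
  have a: "?a \<in> block alpha i"
    by (rule first_in_block[OF parts_pos i])
  have "k = ?a"
  proof (rule ccontr)
    assume "k \<noteq> ?a"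
    then have "?a < k"
      using k by (simp add: block_def)
    then have "?a + 1 \<in> block alpha i"
      using k by (simp add: block_def)
    then have "\<sigma> (?a + 1) < \<sigma> ?a" "\<sigma> ?a < \<sigma> (?a + 1)"
      using desc[OF a _ \<open>?a < k\<close>] Lstar_block_start_smallest[OF s i] by auto
    then show False
      by simp
  qed
  then show ?thesis
    using asc[OF j] j(1) by (simp add: block_def)
qed

lemma Lstar_increasing_on_block:
  assumes s: "\<sigma> \<in> Lstar P le w n alpha" and i: "i \<in> {1..length alpha}"
    and j: "j \<in> block alpha i" "j' \<in> block alpha i" "j < j'"
  shows "\<sigma> j < \<sigma> j'"
proof -
  have "Suc j \<le> j'"
    using j(3) by simp
  then have "j' \<in> block alpha i \<longrightarrow> \<sigma> j < \<sigma> j'"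
  proof (induction rule: dec_induct)
    case base
    then show ?case
      using Lstar_ascent[OF s i j(1)] by simp
  next
    case (step m)
    show ?case
    proof
      assume "Suc m \<in> block alpha i"
      moreover have "m \<in> block alpha i"
        using calculation j(1) step.hyps(1) by (simp add: block_def)
      ultimately show "\<sigma> j < \<sigma> (Suc m)"
        using step.IH Lstar_ascent[OF s i, of m] by simp
    qed
  qed
  then show ?thesis
    using j(2) by blast
qed

lemma Lstar_position_mono:
  assumes s: "\<sigma> \<in> Lstar P le w n alpha" and x: "x \<in> P" and y: "y \<in> P"
    and less: "(f_sigma P w alpha \<sigma> x, w x) < (f_sigma P w alpha \<sigma> y, w y)"
  shows "inv \<sigma> (w x) < inv \<sigma> (w y)"
proof -
  note p = Lstar_D(1)[OF s]
  have px: "inv \<sigma> (w x) \<in> {1..sum_list alpha}" and py: "inv \<sigma> (w y) \<in> {1..sum_list alpha}"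
    using position_in[OF p x] position_in[OF p y] sum_alpha by auto
  have F: "f_sigma P w alpha \<sigma> x = block_index alpha (inv \<sigma> (w x))"
    "f_sigma P w alpha \<sigma> y = block_index alpha (inv \<sigma> (w y))"
    using f_sigma_eq[OF p x] f_sigma_eq[OF p y] .
  consider "f_sigma P w alpha \<sigma> x < f_sigma P w alpha \<sigma> y"
    | "f_sigma P w alpha \<sigma> x = f_sigma P w alpha \<sigma> y" "w x < w y"
    using less by fastforce
  then show ?thesis
  proof cases
    case 1
    then show ?thesis
      using block_index_mono[OF py px] F by (metis leI not_le)
  next
    case 2
    let ?i = "block_index alpha (inv \<sigma> (w x))"
    have i: "?i \<in> {1..length alpha}" and x_in: "inv \<sigma> (w x) \<in> block alpha ?i"
      using block_index[OF px] by auto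
    have y_in: "inv \<sigma> (w y) \<in> block alpha ?i"
      using block_index(2)[OF py] 2(1) F by simp
    show ?thesis
    proof (rule ccontr)
      assume "\<not> ?thesis"
      then consider "inv \<sigma> (w y) < inv \<sigma> (w x)" | "inv \<sigma> (w y) = inv \<sigma> (w x)"
        by linarith
      then have "w y \<le> w x"
      proof cases
        case 1
        then show ?thesis
          using Lstar_increasing_on_block[OF s i y_in x_in] label_at_position[OF p] by (metis less_imp_le)
      qed (metis label_at_position[OF p] order_refl)
      then show False
        using 2(2) by simp
    qed
  qed
qed

lemma Lstar_position_eq_rank:
  assumes s: "\<sigma> \<in> Lstar P le w n alpha" and x: "x \<in> P"
  shows "inv \<sigma> (w x) = rank P (\<lambda>y. (f_sigma P w alpha \<sigma> y, w y)) x"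
  by (rule rank_unique[OF bij_position[OF Lstar_D(1)[OF s]] inj_on_level_label Lstar_position_mono[OF s] x])

lemma inj_on_f_sigma: "inj_on (f_sigma P w alpha) (Lstar P le w n alpha)"
proof (rule inj_onI)
  fix \<sigma>1 \<sigma>2
  assume s1: "\<sigma>1 \<in> Lstar P le w n alpha" and s2: "\<sigma>2 \<in> Lstar P le w n alpha"
    and eq: "f_sigma P w alpha \<sigma>1 = f_sigma P w alpha \<sigma>2"
  note p1 = Lstar_D(1)[OF s1] and p2 = Lstar_D(1)[OF s2]
  show "\<sigma>1 = \<sigma>2"
  proof
    fix j
    show "\<sigma>1 j = \<sigma>2 j"
    proof (cases "j \<in> {1..n}")
      case True
      then obtain x where x: "x \<in> P" "inv \<sigma>1 (w x) = j"
        using ex_at_position[OF p1] by blast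
      then have "inv \<sigma>2 (w x) = j"
        using Lstar_position_eq_rank[OF s1 x(1)] Lstar_position_eq_rank[OF s2 x(1)] eq by simp
      then show ?thesis
        using x label_at_position[OF p1] label_at_position[OF p2] by metis
    next
      case False
      then show ?thesis
        using permutes_not_in[OF p1] permutes_not_in[OF p2] by simp
    qed
  qed
qed

lemma f_sigma_in_Ostar:
  assumes s: "\<sigma> \<in> Lstar P le w n alpha"
  shows "f_sigma P w alpha \<sigma> \<in> Ostar P le alpha"
proof -
  note p = Lstar_D(1)[OF s]
  let ?F = "f_sigma P w alpha \<sigma>"
  have pos: "inv \<sigma> (w x) \<in> {1..sum_list alpha}" if "x \<in> P" for x
    using position_in[OF p that] sum_alpha by simp
  have F: "?F x = block_index alpha (inv \<sigma> (w x))" if "x \<in> P" for x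
    by (rule f_sigma_eq[OF p that])
  have range: "?F x \<in> {1..length alpha}" if "x \<in> P" for x
    using F[OF that] block_index(1)[OF pos[OF that]] by simp
  then have "?F \<in> P \<rightarrow>\<^sub>E {1..length alpha}"
    by (simp add: f_sigma_def)
  moreover have "?F ` P = {1..length alpha}"
  proof
    show "?F ` P \<subseteq> {1..length alpha}"
      using range by (rule image_subsetI)
    show "{1..length alpha} \<subseteq> ?F ` P"
    proof
      fix i assume i: "i \<in> {1..length alpha}"
      have a: "sum_list (take (i - 1) alpha) + 1 \<in> block alpha i"
        by (rule first_in_block[OF parts_pos i])
      then obtain x where x: "x \<in> P" "inv \<sigma> (w x) = sum_list (take (i - 1) alpha) + 1"
        using ex_at_position[OF p] block_in_range[OF i] by blast
      then have "?F x = i"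
        using F block_index_eq[OF i a] by simp
      then show "i \<in> ?F ` P"
        using x(1) by (metis image_eqI)
    qed
  qed
  moreover have "?F x \<le> ?F y" if "x \<in> P" "y \<in> P" "le x y" for x y
  proof (cases "x = y")
    case False
    then have "inv \<sigma> (w x) < inv \<sigma> (w y)"
      using Lstar_D(2)[OF s that] by simp
    then show ?thesis
      using block_index_mono[OF pos pos] F that by simp
  qed simp
  moreover have "card {x\<in>P. ?F x = i} = alpha ! (i - 1)" if i: "i \<in> {1..length alpha}" for i
  proof -
    have "card {x\<in>P. ?F x = i} = card (block alpha i)"
      using card_preimage_bij_betw[OF bij_position[OF p] block_in_range[OF i]]
      by (simp add: fiber_f_sigma[OF p i] part_set_eq[OF p])
    then show ?thesis
      using card_block[OF i] by simp
  qed
  moreover have "unique_minimal le {x\<in>P. ?F x = i}" if "i \<in> {1..length alpha}" for i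
    using fiber_f_sigma[OF p that] Lstar_D(4)[OF s that] by simp
  ultimately show ?thesis
    unfolding Ostar_def by blast
qed

lemma Ostar_D:
  assumes "f \<in> Ostar P le alpha"
  shows "\<And>x. x \<in> P \<Longrightarrow> f x \<in> {1..length alpha}"
    and "f \<in> extensional P"
    and "\<And>x y. x \<in> P \<Longrightarrow> y \<in> P \<Longrightarrow> le x y \<Longrightarrow> f x \<le> f y"
    and "\<And>i. i \<in> {1..length alpha} \<Longrightarrow> card {x\<in>P. f x = i} = alpha ! (i - 1)"
    and "\<And>i. i \<in> {1..length alpha} \<Longrightarrow> unique_minimal le {x\<in>P. f x = i}"
  using assms by (auto simp: Ostar_def PiE_iff)

lemma Ostar_rank_in_block:
  assumes f: "f \<in> Ostar P le alpha" and x: "x \<in> P"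
  shows "rank P (\<lambda>y. (f y, w y)) x \<in> block alpha (f x)"
proof -
  have fx: "f x \<in> {1..length alpha}"
    by (rule Ostar_D(1)[OF f x])
  let ?lower = "{y\<in>P. f y \<le> f x - 1}" and ?level = "{y\<in>P. f y = f x \<and> w y < w x}"
  have "{y\<in>P. (f y, w y) < (f x, w x)} = ?lower \<union> ?level"
    using Ostar_D(1)[OF f] fx by fastforce
  moreover have "card (?lower \<union> ?level) = card ?lower + card ?level"
    using finite_P fx by (intro card_Un_disjoint) auto
  moreover have "card ?lower = sum_list (take (f x - 1) alpha)"
    using card_le_level[OF finite_P _ Ostar_D(4)[OF f]] Ostar_D(1)[OF f] fx by force
  moreover have "card ?level < alpha ! (f x - 1)"
  proof -
    have "?level \<subset> {y\<in>P. f y = f x}"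
      using x by auto
    then have "card ?level < card {y\<in>P. f y = f x}"
      using finite_P by (intro psubset_card_mono) auto
    then show ?thesis
      using Ostar_D(4)[OF f fx] by simp
  qed
  ultimately show ?thesis
    using fx by (simp add: rank_def block_eq_interval)
qed

lemma f_sigma_of_rank:
  assumes f: "f \<in> Ostar P le alpha" and p: "\<sigma> permutes {1..n}"
    and pos: "\<And>x. x \<in> P \<Longrightarrow> inv \<sigma> (w x) = rank P (\<lambda>y. (f y, w y)) x"
  shows "f_sigma P w alpha \<sigma> = f"
proof
  fix x
  show "f_sigma P w alpha \<sigma> x = f x"
  proof (cases "x \<in> P")
    case True
    then show ?thesis
      using f_sigma_eq[OF p True] pos[OF True] block_index_eq[OF Ostar_D(1)[OF f True] Ostar_rank_in_block[OF f True]]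
      by simp
  next
    case False
    then show ?thesis
      using extensional_arb[OF Ostar_D(2)[OF f] False] by (simp add: f_sigma_def)
  qed
qed

lemma Lstar_of_rank:
  assumes f: "f \<in> Ostar P le alpha" and p: "\<sigma> permutes {1..n}"
    and pos: "\<And>x. x \<in> P \<Longrightarrow> inv \<sigma> (w x) = rank P (\<lambda>y. (f y, w y)) x"
  shows "\<sigma> \<in> Lstar P le w n alpha"
proof -
  note rank_less = rank_less_iff[OF finite_P inj_on_level_label[of f]]
  have "inv \<sigma> (w x) < inv \<sigma> (w y)" if "x \<in> P" "y \<in> P" "le x y" "x \<noteq> y" for x y
    using Ostar_D(3)[OF f that(1-3)] less_label[OF that] rank_less[OF that(1,2)] pos that(1,2) by simp
  moreover have "alpha_unimodal alpha \<sigma>"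
  proof (rule alpha_unimodal_if_ascending[OF parts_pos])
    fix i j assume i: "i \<in> {1..length alpha}" and j: "j \<in> block alpha i" "j + 1 \<in> block alpha i"
    obtain x where x: "x \<in> P" "inv \<sigma> (w x) = j"
      using ex_at_position[OF p] j(1) block_in_range[OF i] by blast
    obtain y where y: "y \<in> P" "inv \<sigma> (w y) = j + 1"
      using ex_at_position[OF p] j(2) block_in_range[OF i] by blast
    have "f x = i" "f y = i"
      using f_sigma_eq[OF p] f_sigma_of_rank[OF assms] x y j block_index_eq[OF i] by metis+
    moreover have "(f x, w x) < (f y, w y)"
      using rank_less[OF x(1) y(1)] pos x y by simp
    ultimately have "w x < w y"
      by simp
    then show "\<sigma> j < \<sigma> (j + 1)"
      using x(2) y(2) label_at_position[OF p] by metis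
  qed
  moreover have "unique_minimal le (part_set P w alpha \<sigma> i)" if "i \<in> {1..length alpha}" for i
    using fiber_f_sigma[OF p that] f_sigma_of_rank[OF assms] Ostar_D(5)[OF f that] by simp
  ultimately show ?thesis
    using p by (simp add: Lstar_def lin_ext_def)
qed

lemma Ostar_has_preimage:
  assumes f: "f \<in> Ostar P le alpha"
  shows "\<exists>\<sigma>\<in>Lstar P le w n alpha. f_sigma P w alpha \<sigma> = f"
proof -
  have "bij_betw (rank P (\<lambda>y. (f y, w y))) P {1..n}"
    using bij_betw_rank[OF finite_P inj_on_level_label] bij_betw_same_card[OF bij_w] by simp
  then obtain \<sigma> where "\<sigma> permutes {1..n}" "\<And>x. x \<in> P \<Longrightarrow> inv \<sigma> (w x) = rank P (\<lambda>y. (f y, w y)) x"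
    using permutation_with_positions[OF bij_w] by metis
  then show ?thesis
    using Lstar_of_rank[OF f] f_sigma_of_rank[OF f] by blast
qed

end

theorem proposition5p1:
  fixes P :: "'a set" and le :: "'a \<Rightarrow> 'a \<Rightarrow> bool" and w :: "'a \<Rightarrow> nat"
    and n :: nat and alpha :: "nat list"
  assumes "labeled_poset P le w n"
    and "naturally_labeled P le w"
    and "is_composition alpha n"
  shows "bij_betw (f_sigma P w alpha) (Lstar P le w n alpha) (Ostar P le alpha)"
proof -
  interpret labeled_composition P le w n alpha
    using assms by unfold_locales
  have "f_sigma P w alpha ` Lstar P le w n alpha = Ostar P le alpha"
  proof
    show "f_sigma P w alpha ` Lstar P le w n alpha \<subseteq> Ostar P le alpha"
      using f_sigma_in_Ostar by (rule image_subsetI)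
    show "Ostar P le alpha \<subseteq> f_sigma P w alpha ` Lstar P le w n alpha"
    proof
      fix f assume "f \<in> Ostar P le alpha"
      then obtain \<sigma> where "\<sigma> \<in> Lstar P le w n alpha" "f_sigma P w alpha \<sigma> = f"
        using Ostar_has_preimage by blast
      then show "f \<in> f_sigma P w alpha ` Lstar P le w n alpha"
        by (metis image_eqI)
    qed
  qed
  then show ?thesis
    using inj_on_f_sigma by (simp add: bij_betw_def)
qed

end
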